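(* Let $\alpha_1,\alpha_2,\alpha_3\in(0,\pi)$ with $\alpha_1+\alpha_2+\alpha_3=2\pi$ and $\alpha_2\ge\alpha_1$. Then $$(\sin\alpha_1+\sin\alpha_2+\sin\alpha_3)^2<\Big[\big(\sin\tfrac{\alpha_3}{2}-\sin\tfrac{\alpha_2-\alpha_1}{2}\big)\sin\alpha_2+\big(\sin\tfrac{\alpha_3}{2}+\sin\tfrac{\alpha_2-\alpha_1}{2}\big)\sin\alpha_1\Big]^2+\Big[(\sin\alpha_1+\sin\alpha_2)\big(\cos\tfrac{\alpha_3}{2}+\cos\tfrac{\alpha_2-\alpha_1}{2}\big)\Big]^2.$$ Equivalently, if $\sigma_{12},\sigma_{13},\sigma_{23}>0$ satisfy $\sin\alpha_1/\sigma_{23}=\sin\alpha_2/\sigma_{13}=\sin\alpha_3/\sigma_{12}$, then $$(\sigma_{12}+\sigma_{13}+\sigma_{23})^2<\Big[\big(\sin\tfrac{\alpha_3}{2}-\sin\tfrac{\alpha_2-\alpha_1}{2}\big)\sigma_{13}+\big(\sin\tfrac{\alpha_3}{2}+\sin\tfrac{\alpha_2-\alpha_1}{2}\big)\sigma_{23}\Big]^2+\Big[(\sigma_{13}+\sigma_{23})\big(\cos\tfrac{\alpha_3}{2}+\cos\tfrac{\alpha_2-\alpha_1}{2}\big)\Big]^2.$$ *)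

theory Defs
  imports Complex_Main
begin

end

theory Submission
  imports Defs
begin

text \<open>Write \<open>a\<^sub>1 = 2x\<close>, \<open>a\<^sub>2 = 2y\<close>, so that \<open>a\<^sub>3/2 = \<pi> - (x + y)\<close>. Then
  \<open>sin a\<^sub>1 + sin a\<^sub>2 + sin a\<^sub>3 = 4 sin x sin y sin (x + y)\<close>, and the three half-angle
  brackets on the right become \<open>2 sin x cos y\<close>, \<open>2 cos x sin y\<close> and \<open>2 sin x sin y\<close>.
  After cancelling \<open>(4 sin x sin y)\<^sup>2\<close> the claim is
  \<open>sin\<^sup>2 (x + y) < (cos\<^sup>2 x + cos\<^sup>2 y)\<^sup>2 + (sin x cos x + sin y cos y)\<^sup>2\<close>, and the difference
  of the two sides is exactly \<open>4 cos\<^sup>2 x cos\<^sup>2 y\<close>. The version with the \<open>\<sigma>\<close>'s is the same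
  inequality scaled by the common ratio of the law of sines.\<close>

lemma sin_add_squared_identity:
  fixes x y :: real
  shows "sin (x + y)^2 + 4 * (cos x * cos y)^2
           = (cos x ^ 2 + cos y ^ 2)^2 + (sin x * cos x + sin y * cos y)^2"
proof -
  have "sin x ^ 2 + cos x ^ 2 = 1" "sin y ^ 2 + cos y ^ 2 = 1" by simp_all
  then show ?thesis unfolding sin_add by algebra
qed

lemma sin_add_squared_less:
  fixes x y :: real
  assumes "cos x \<noteq> 0" "cos y \<noteq> 0"
  shows "sin (x + y)^2 < (cos x ^ 2 + cos y ^ 2)^2 + (sin x * cos x + sin y * cos y)^2"
proof -
  have "0 < 4 * (cos x * cos y)^2" using assms by simp
  then show ?thesis using sin_add_squared_identity[of x y] by linarith
qed

lemma sin_sum_of_angles_sum_2pi: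
  fixes a1 a2 a3 :: real
  assumes "a1 + a2 + a3 = 2 * pi"
  shows "sin a1 + sin a2 + sin a3 = 4 * sin (a1/2) * sin (a2/2) * sin (a1/2 + a2/2)"
proof -
  define x y where "x = a1/2" and "y = a2/2"
  have "a3 = 2 * pi - 2 * (x + y)" using assms unfolding x_def y_def by simp
  then have "sin a3 = - sin (2 * (x + y))" by (simp add: sin_diff)
  moreover have "sin a1 = sin (2 * x)" "sin a2 = sin (2 * y)" unfolding x_def y_def by simp_all
  moreover have "sin x ^ 2 + cos x ^ 2 = 1" "sin y ^ 2 + cos y ^ 2 = 1" by simp_all
  ultimately show ?thesis
    unfolding x_def[symmetric] y_def[symmetric] sin_double sin_add cos_add by algebra
qed

lemma sine_sum_squared_less:
  fixes a1 a2 a3 :: real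
  assumes sum: "a1 + a2 + a3 = 2 * pi"
    and "sin (a1/2) \<noteq> 0" "sin (a2/2) \<noteq> 0" "cos (a1/2) \<noteq> 0" "cos (a2/2) \<noteq> 0"
  shows "(sin a1 + sin a2 + sin a3)^2 <
           ((sin (a3/2) - sin ((a2 - a1)/2)) * sin a2 + (sin (a3/2) + sin ((a2 - a1)/2)) * sin a1)^2
         + ((sin a1 + sin a2) * (cos (a3/2) + cos ((a2 - a1)/2)))^2"
proof -
  define x y where "x = a1/2" and "y = a2/2"
  have half: "a3/2 = pi - (x + y)" and diff: "(a2 - a1)/2 = y - x"
    using sum unfolding x_def y_def by simp_all
  have "sin a1 = 2 * sin x * cos x" "sin a2 = 2 * sin y * cos y"
    unfolding x_def y_def using sin_double[of "a1/2"] sin_double[of "a2/2"] by simp_all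
  moreover have "sin (a3/2) - sin ((a2 - a1)/2) = 2 * sin x * cos y"
    and "sin (a3/2) + sin ((a2 - a1)/2) = 2 * cos x * sin y"
    and "cos (a3/2) + cos ((a2 - a1)/2) = 2 * sin x * sin y"
    unfolding half diff by (simp_all add: sin_add cos_add sin_diff cos_diff)
  ultimately have rhs:
    "((sin (a3/2) - sin ((a2 - a1)/2)) * sin a2 + (sin (a3/2) + sin ((a2 - a1)/2)) * sin a1)^2
      + ((sin a1 + sin a2) * (cos (a3/2) + cos ((a2 - a1)/2)))^2
     = (4 * sin x * sin y)^2 * ((cos x ^ 2 + cos y ^ 2)^2 + (sin x * cos x + sin y * cos y)^2)"
    by (simp add: power2_eq_square algebra_simps)
  have lhs: "(sin a1 + sin a2 + sin a3)^2 = (4 * sin x * sin y)^2 * sin (x + y)^2"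
    using sin_sum_of_angles_sum_2pi[OF sum] unfolding x_def y_def by (simp add: power_mult_distrib)
  have "0 < (4 * sin x * sin y)^2" using assms unfolding x_def y_def by simp
  then show ?thesis
    unfolding lhs rhs using sin_add_squared_less assms unfolding x_def y_def by simp
qed

lemma scaled_sum_squared_less:
  fixes a b c p q r k :: real
  assumes "(a + b + c)^2 < (p * b + q * a)^2 + ((a + b) * r)^2" and "k \<noteq> 0"
  shows "(k * c + k * b + k * a)^2 < (p * (k * b) + q * (k * a))^2 + ((k * b + k * a) * r)^2"
proof -
  have "(k * c + k * b + k * a)^2 = k^2 * (a + b + c)^2"
    and "(p * (k * b) + q * (k * a))^2 + ((k * b + k * a) * r)^2
           = k^2 * ((p * b + q * a)^2 + ((a + b) * r)^2)"
    by (simp_all add: power2_eq_square algebra_simps)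
  then show ?thesis using assms by simp
qed

lemma common_ratio_scaling:
  fixes u1 u2 u3 s1 s2 s3 :: real
  assumes "0 < s1" "0 < s2" "0 < s3" "0 < u2"
    and "u1 / s1 = u2 / s2" "u2 / s2 = u3 / s3"
  obtains k where "0 < k" "s1 = k * u1" "s2 = k * u2" "s3 = k * u3"
proof
  show "0 < s2 / u2" "s2 = s2 / u2 * u2" using assms by simp_all
  have "u1 * s2 = u2 * s1" using assms(1,2,5) by (simp add: frac_eq_eq)
  then show "s1 = s2 / u2 * u1" using assms(4) by (simp add: field_simps)
  have "u2 * s3 = u3 * s2" using assms(2,3,6) by (simp add: frac_eq_eq)
  then show "s3 = s2 / u2 * u3" using assms(4) by (simp add: field_simps)
qed

theorem mainTheorem7:
  fixes a1 a2 a3 :: real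
  assumes "0 < a1" "a1 < pi" "0 < a2" "a2 < pi" "0 < a3" "a3 < pi"
    and "a1 + a2 + a3 = 2 * pi" and "a2 \<ge> a1"
  shows "(sin a1 + sin a2 + sin a3)^2 <
           ((sin (a3/2) - sin ((a2 - a1)/2)) * sin a2 + (sin (a3/2) + sin ((a2 - a1)/2)) * sin a1)^2
         + ((sin a1 + sin a2) * (cos (a3/2) + cos ((a2 - a1)/2)))^2
       \<and> (\<forall>s12 s13 s23 :: real. 0 < s12 \<longrightarrow> 0 < s13 \<longrightarrow> 0 < s23 \<longrightarrow>
           sin a1 / s23 = sin a2 / s13 \<longrightarrow> sin a2 / s13 = sin a3 / s12 \<longrightarrow>
           (s12 + s13 + s23)^2 <
           ((sin (a3/2) - sin ((a2 - a1)/2)) * s13 + (sin (a3/2) + sin ((a2 - a1)/2)) * s23)^2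
         + ((s13 + s23) * (cos (a3/2) + cos ((a2 - a1)/2)))^2)"
    (is "?angles \<and> ?sigmas")
proof
  have "sin (a1/2) > 0" "sin (a2/2) > 0" "cos (a1/2) > 0" "cos (a2/2) > 0"
    using assms by (simp_all add: sin_gt_zero cos_gt_zero)
  then show ?angles
    using sine_sum_squared_less[OF assms(7)] by simp
  show ?sigmas
  proof (intro allI impI)
    fix s12 s13 s23 :: real
    assume "0 < s12" "0 < s13" "0 < s23"
      "sin a1 / s23 = sin a2 / s13" "sin a2 / s13 = sin a3 / s12"
    moreover have "0 < sin a2" using assms by (simp add: sin_gt_zero)
    ultimately obtain k where "0 < k" "s23 = k * sin a1" "s13 = k * sin a2" "s12 = k * sin a3"
      using common_ratio_scaling[of s23 s13 s12 "sin a2"] by blast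
    with scaled_sum_squared_less[OF \<open>?angles\<close>, of k] show "(s12 + s13 + s23)^2 <
           ((sin (a3/2) - sin ((a2 - a1)/2)) * s13 + (sin (a3/2) + sin ((a2 - a1)/2)) * s23)^2
         + ((s13 + s23) * (cos (a3/2) + cos ((a2 - a1)/2)))^2"
      by simp
  qed
qed

end
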